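(* Let $\mu\in[-1/3,0]$ and $P\in[0,1]$, and for $\Gamma\in[0,1)$ set \[ B_G^{(2)}(\Gamma):=[-4\Gamma P+2P-2\Gamma+3]+\mu[3-2\Gamma-4P]. \] Then there exists a real number $c<1/2$ such that $B_G^{(2)}(\Gamma)<0$ for every $\Gamma\in[0,1)$ with $\Gamma-\tfrac12>c$, if and only if \[ 1-P<\frac{1+3\mu}{2+4\mu}. \]
   Context: In the application, $\Gamma=\Gamma(k)$ is the fraction of the potential enstrophy spectrum at wavenumber $k$ contained in the upper layer, $P=P(k)$ is the fraction of the energy spectrum at $k$ that is baroclinic, and $\mu\in[-1/3,0]$ is the Ekman extrapolation parameter; $B_G^{(2)}$ is a coefficient in the potential enstrophy dissipation rate spectrum of the asymmetric Ekman term. *)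

theory Defs
  imports Complex_Main
begin

definition B_G2 :: "real \<Rightarrow> real \<Rightarrow> real \<Rightarrow> real" where
  "B_G2 \<mu> P \<Gamma> = (-4*\<Gamma>*P + 2*P - 2*\<Gamma> + 3) + \<mu> * (3 - 2*\<Gamma> - 4*P)"

end

theory Submission
  imports Defs
begin

text \<open>
  As a function of \<Gamma>, the coefficient B_G2 is affine with slope -(4P + 2 + 2\<mu>), which is
  negative for \<mu> \<ge> -1/3 and P \<ge> 0. The condition on the left-hand side says that B_G2 is
  negative for all \<Gamma> < 1 close enough to 1; for a strictly decreasing affine function this
  holds exactly when its value at \<Gamma> = 1 is negative, and clearing the positive denominator
  2 + 4\<mu> turns B_G2(1) < 0 into the stated inequality.
\<close>

lemma eventually_at_left_one_iff:
  "(\<exists>c::real. c < 1/2 \<and> (\<forall>\<Gamma>. 0 \<le> \<Gamma> \<and> \<Gamma> < 1 \<and> \<Gamma> - 1/2 > c \<longrightarrow> Q \<Gamma>))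
     \<longleftrightarrow> (\<forall>\<^sub>F \<Gamma> in at_left 1. Q \<Gamma>)"
  unfolding eventually_at_left_field
proof
  assume "\<exists>c<1/2. \<forall>\<Gamma>. 0 \<le> \<Gamma> \<and> \<Gamma> < 1 \<and> \<Gamma> - 1/2 > c \<longrightarrow> Q \<Gamma>"
  then obtain c where "c < 1/2" and "\<forall>\<Gamma>. 0 \<le> \<Gamma> \<and> \<Gamma> < 1 \<and> \<Gamma> - 1/2 > c \<longrightarrow> Q \<Gamma>"
    by blast
  then show "\<exists>b<1. \<forall>\<Gamma>>b. \<Gamma> < 1 \<longrightarrow> Q \<Gamma>"
    by (intro exI[of _ "max 0 (c + 1/2)"]) auto
next
  assume "\<exists>b<1. \<forall>\<Gamma>>b. \<Gamma> < 1 \<longrightarrow> Q \<Gamma>"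
  then obtain b where "b < 1" and "\<forall>\<Gamma>>b. \<Gamma> < 1 \<longrightarrow> Q \<Gamma>"
    by blast
  then show "\<exists>c<1/2. \<forall>\<Gamma>. 0 \<le> \<Gamma> \<and> \<Gamma> < 1 \<and> \<Gamma> - 1/2 > c \<longrightarrow> Q \<Gamma>"
    by (intro exI[of _ "max 0 b - 1/2"]) auto
qed

lemma eventually_at_left_affine_neg_iff:
  fixes a s x\<^sub>0 :: real
  assumes "s > 0"
  shows "(\<forall>\<^sub>F x in at_left x\<^sub>0. a + s * (x\<^sub>0 - x) < 0) \<longleftrightarrow> a < 0"
proof
  assume "\<forall>\<^sub>F x in at_left x\<^sub>0. a + s * (x\<^sub>0 - x) < 0"
  moreover have "\<forall>\<^sub>F x in at_left x\<^sub>0. x < x\<^sub>0"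
    by (simp add: eventually_at_filter)
  ultimately have "\<forall>\<^sub>F x in at_left x\<^sub>0. a + s * (x\<^sub>0 - x) < 0 \<and> x < x\<^sub>0"
    by (rule eventually_conj)
  then obtain x where "a + s * (x\<^sub>0 - x) < 0" and "x < x\<^sub>0"
    using eventually_happens' trivial_limit_at_left_real by blast
  moreover have "s * (x\<^sub>0 - x) > 0"
    using assms \<open>x < x\<^sub>0\<close> by simp
  ultimately show "a < 0"
    by linarith
next
  assume "a < 0"
  have "a + s * (x\<^sub>0 - x) < 0" if "x\<^sub>0 + a / s < x" for x
    using that assms by (simp add: field_simps)
  moreover have "x\<^sub>0 + a / s < x\<^sub>0"
    using \<open>a < 0\<close> assms by (simp add: divide_neg_pos)
  ultimately show "\<forall>\<^sub>F x in at_left x\<^sub>0. a + s * (x\<^sub>0 - x) < 0"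
    unfolding eventually_at_left_field by blast
qed

lemma B_G2_affine: "B_G2 \<mu> P \<Gamma> = B_G2 \<mu> P 1 + (4*P + 2 + 2*\<mu>) * (1 - \<Gamma>)"
  by (simp add: B_G2_def algebra_simps)

lemma B_G2_one_neg_iff:
  assumes "-1/3 \<le> \<mu>"
  shows "B_G2 \<mu> P 1 < 0 \<longleftrightarrow> 1 - P < (1 + 3*\<mu>) / (2 + 4*\<mu>)"
proof -
  have "2 + 4*\<mu> > 0"
    using assms by linarith
  then have "1 - P < (1 + 3*\<mu>) / (2 + 4*\<mu>) \<longleftrightarrow> (1 - P) * (2 + 4*\<mu>) < 1 + 3*\<mu>"
    by (simp add: pos_less_divide_eq)
  then show ?thesis
    by (simp add: B_G2_def algebra_simps)
qed

theorem proposition6: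
  fixes \<mu> P :: real
  assumes "-1/3 \<le> \<mu>" and "\<mu> \<le> 0" and "0 \<le> P" and "P \<le> 1"
  shows "(\<exists>c::real. c < 1/2 \<and>
            (\<forall>\<Gamma>::real. 0 \<le> \<Gamma> \<and> \<Gamma> < 1 \<and> \<Gamma> - 1/2 > c \<longrightarrow> B_G2 \<mu> P \<Gamma> < 0))
         \<longleftrightarrow> 1 - P < (1 + 3*\<mu>) / (2 + 4*\<mu>)"
proof -
  have slope: "4*P + 2 + 2*\<mu> > 0"
    using assms by linarith
  have "(\<forall>\<^sub>F \<Gamma> in at_left 1. B_G2 \<mu> P \<Gamma> < 0) \<longleftrightarrow>
      (\<forall>\<^sub>F \<Gamma> in at_left 1. B_G2 \<mu> P 1 + (4*P + 2 + 2*\<mu>) * (1 - \<Gamma>) < 0)"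
    by (intro eventually_subst always_eventually allI) (subst B_G2_affine, rule refl)
  also have "\<dots> \<longleftrightarrow> B_G2 \<mu> P 1 < 0"
    by (rule eventually_at_left_affine_neg_iff[OF slope])
  finally show ?thesis
    unfolding eventually_at_left_one_iff B_G2_one_neg_iff[OF assms(1)] .
qed

end
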